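(* Let $G$ and $G'$ be graphs on the same vertex set $V$ such that $G'$ is obtained from $G$ by a single swap, i.e. there are distinct vertices $a,b,c,d$ with $ab,cd\in E(G)$, $ac,bd\notin E(G)$, and $E(G')=(E(G)\setminus\{ab,cd\})\cup\{ac,bd\}$. Then $|\mu(G)-\mu(G')|\le 1$.
   Context: All graphs are finite and simple. For a graph $G=(V,E)$ on $n$ vertices, a fractional vertex cover is a function $f:V\to[0,\infty)$ with $f(u)+f(v)\ge 1$ for every edge $uv\in E$; $\tau^*(G)$ denotes the minimum of $\sum_{v\in V}f(v)$ over all fractional vertex covers. For $E'\subseteq E$ let $G-E'=(V,E\setminus E')$. Define $\mu(G)=\min\{|E'| : E'\subseteq E,\ \tau^*(G-E')<n/2\}$. *)

theory Defs
  imports Complex_Main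
begin

definition simple_graph :: "'a set \<Rightarrow> 'a set set \<Rightarrow> bool" where
  "simple_graph V E \<longleftrightarrow> finite V \<and> (\<forall>e\<in>E. e \<subseteq> V \<and> card e = 2)"

definition frac_vertex_cover :: "'a set \<Rightarrow> 'a set set \<Rightarrow> ('a \<Rightarrow> real) \<Rightarrow> bool" where
  "frac_vertex_cover V E f \<longleftrightarrow>
     (\<forall>v\<in>V. f v \<ge> 0) \<and> (\<forall>u v. {u, v} \<in> E \<longrightarrow> f u + f v \<ge> 1)"

definition tau_star :: "'a set \<Rightarrow> 'a set set \<Rightarrow> real" where
  "tau_star V E = Inf {(\<Sum>v\<in>V. f v) | f. frac_vertex_cover V E f}"

definition mu :: "'a set \<Rightarrow> 'a set set \<Rightarrow> nat" where
  "mu V E = (LEAST k. \<exists>E'. E' \<subseteq> E \<and> card E' = k \<and> tau_star V (E - E') < real (card V) / 2)"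

end

theory Submission
  imports Defs
begin

text \<open>Take a minimum deletion set \<open>E'\<close> for \<open>G\<close> together with a fractional cover \<open>f\<close> of
  \<open>G - E'\<close> of weight below \<open>n/2\<close>. If \<open>E'\<close> contains \<open>ab\<close> or \<open>cd\<close>, deleting instead \<open>E' \<inter> E(G')\<close>
  together with \<open>ac\<close> and \<open>bd\<close> costs at most one edge more, and \<open>f\<close> still works. Otherwise
  \<open>f\<close> covers \<open>ab\<close> and \<open>cd\<close>, so \<open>f a + f b + f c + f d \<ge> 2\<close> and \<open>f\<close> covers \<open>ac\<close> or \<open>bd\<close>;
  deleting \<open>E' \<inter> E(G')\<close> and the other of the two new edges suffices. Hence
  \<open>\<mu>(G') \<le> \<mu>(G) + 1\<close>, and the converse bound holds because \<open>G\<close> arises from \<open>G'\<close> by a swap.\<close>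

lemma frac_vertex_cover_antimono:
  "frac_vertex_cover V E f \<Longrightarrow> F \<subseteq> E \<Longrightarrow> frac_vertex_cover V F f"
  unfolding frac_vertex_cover_def by blast

lemma frac_vertex_cover_insert:
  assumes "frac_vertex_cover V E f" "1 \<le> f u + f v"
  shows "frac_vertex_cover V (insert {u, v} E) f"
  unfolding frac_vertex_cover_def
proof (intro conjI allI impI)
  show "\<forall>w\<in>V. 0 \<le> f w" using assms(1) by (simp add: frac_vertex_cover_def)
next
  fix x y assume "{x, y} \<in> insert {u, v} E"
  then consider "{x, y} \<in> E" | "x = u \<and> y = v \<or> x = v \<and> y = u"
    by (auto simp: doubleton_eq_iff)
  then show "1 \<le> f x + f y"
    by cases (use assms in \<open>auto simp: frac_vertex_cover_def\<close>)
qed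

lemma tau_star_less_iff:
  "tau_star V E < x \<longleftrightarrow> (\<exists>f. frac_vertex_cover V E f \<and> sum f V < x)"
proof -
  let ?S = "{(\<Sum>v\<in>V. f v) | f. frac_vertex_cover V E f}"
  have "frac_vertex_cover V E (\<lambda>_. 1)" by (simp add: frac_vertex_cover_def)
  then have "?S \<noteq> {}" by blast
  moreover have "bdd_below ?S"
    unfolding bdd_below_def frac_vertex_cover_def by (rule exI[of _ 0]) (auto intro: sum_nonneg)
  ultimately show ?thesis
    unfolding tau_star_def by (subst cInf_less_iff) auto
qed

lemma mu_le_card:
  assumes "F \<subseteq> E" "frac_vertex_cover V (E - F) f" "sum f V < real (card V) / 2"
  shows "mu V E \<le> card F"
proof -
  have "tau_star V (E - F) < real (card V) / 2"
    unfolding tau_star_less_iff using assms(2,3) by blast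
  then show ?thesis unfolding mu_def using assms(1) by (intro Least_le) blast
qed

lemma mu_obtains_witness:
  assumes "finite V" "V \<noteq> {}"
  obtains E' f where "E' \<subseteq> E" "card E' = mu V E"
    "frac_vertex_cover V (E - E') f" "sum f V < real (card V) / 2"
proof -
  let ?P = "\<lambda>k. \<exists>E'. E' \<subseteq> E \<and> card E' = k \<and> tau_star V (E - E') < real (card V) / 2"
  have "frac_vertex_cover V (E - E) (\<lambda>_. 0)" by (simp add: frac_vertex_cover_def)
  moreover have "(\<Sum>v\<in>V. 0::real) < real (card V) / 2"
    using assms by (simp add: card_gt_0_iff)
  ultimately have "tau_star V (E - E) < real (card V) / 2"
    unfolding tau_star_less_iff by blast
  then have "?P (card E)" by blast
  then have "?P (mu V E)" unfolding mu_def by (rule LeastI)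
  then obtain E' where E': "E' \<subseteq> E" "card E' = mu V E" "tau_star V (E - E') < real (card V) / 2"
    by blast
  from E'(3) obtain f where "frac_vertex_cover V (E - E') f" "sum f V < real (card V) / 2"
    unfolding tau_star_less_iff by blast
  with E'(1,2) show ?thesis by (rule that)
qed

lemma swap_deletion_set:
  assumes "finite E'" and f: "frac_vertex_cover V (E - E') f"
    and "distinct [a, b, c, d]" "{a, b} \<in> E" "{c, d} \<in> E"
    and E2: "E2 = (E - {{a, b}, {c, d}}) \<union> {{a, c}, {b, d}}"
  shows "\<exists>F. F \<subseteq> E2 \<and> card F \<le> card E' + 1 \<and> frac_vertex_cover V (E2 - F) f"
proof -
  have "{a, b} \<notin> E2" "{c, d} \<notin> E2"
    unfolding E2 using \<open>distinct [a, b, c, d]\<close> by (auto simp: doubleton_eq_iff)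
  show ?thesis
  proof (cases "{a, b} \<in> E' \<or> {c, d} \<in> E'")
    case True
    let ?F = "(E' \<inter> E2) \<union> {{a, c}, {b, d}}"
    have "card (E' \<inter> E2) < card E'"
      using True \<open>{a, b} \<notin> E2\<close> \<open>{c, d} \<notin> E2\<close> \<open>finite E'\<close> by (intro psubset_card_mono) auto
    moreover have "card ?F \<le> card (E' \<inter> E2) + 2"
      by (rule order_trans[OF card_Un_le]) (simp add: card_insert_if)
    moreover have "E2 - ?F \<subseteq> E - E'" using E2 by auto
    ultimately show ?thesis
      using E2 f frac_vertex_cover_antimono by (intro exI[of _ ?F]) auto
  next
    case False
    then have "1 \<le> f a + f b" "1 \<le> f c + f d"
      using f \<open>{a, b} \<in> E\<close> \<open>{c, d} \<in> E\<close> by (auto simp: frac_vertex_cover_def)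
    then obtain u v w x where uvwx:
        "{u, v} = {a, c} \<and> {w, x} = {b, d} \<or> {u, v} = {b, d} \<and> {w, x} = {a, c}"
        "1 \<le> f u + f v"
    proof (cases "1 \<le> f a + f c")
      case True
      then show ?thesis using that[of a c b d] by blast
    next
      case False
      then have "1 \<le> f b + f d" using \<open>1 \<le> f a + f b\<close> \<open>1 \<le> f c + f d\<close> by linarith
      then show ?thesis using that[of b d a c] by blast
    qed
    let ?F = "(E' \<inter> E2) \<union> {{w, x}}"
    have "E2 - ?F \<subseteq> insert {u, v} (E - E')" using E2 uvwx(1) by blast
    then have "frac_vertex_cover V (E2 - ?F) f"
      using frac_vertex_cover_insert[OF f uvwx(2)] by (rule frac_vertex_cover_antimono[rotated])
    moreover have "?F \<subseteq> E2" using E2 uvwx(1) by blast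
    moreover have "card ?F \<le> card E' + 1"
      using card_mono[OF \<open>finite E'\<close>, of "E' \<inter> E2"] card_Un_le[of "E' \<inter> E2" "{{w, x}}"] by auto
    ultimately show ?thesis by blast
  qed
qed

lemma mu_swap_le:
  assumes "finite V" "V \<noteq> {}" "finite E"
    and "distinct [a, b, c, d]" "{a, b} \<in> E" "{c, d} \<in> E"
    and "E2 = (E - {{a, b}, {c, d}}) \<union> {{a, c}, {b, d}}"
  shows "mu V E2 \<le> mu V E + 1"
proof -
  obtain E' f where E': "E' \<subseteq> E" "card E' = mu V E"
    and f: "frac_vertex_cover V (E - E') f" "sum f V < real (card V) / 2"
    using mu_obtains_witness[OF assms(1,2)] .
  have "finite E'" using E'(1) \<open>finite E\<close> finite_subset by blast
  then obtain F where "F \<subseteq> E2" "card F \<le> card E' + 1" "frac_vertex_cover V (E2 - F) f"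
    using swap_deletion_set[OF _ f(1) assms(4-7)] by blast
  then show ?thesis using mu_le_card[of F E2 V f] f(2) E'(2) by linarith
qed

theorem lemma12:
  fixes V :: "'a set" and E E2 :: "'a set set" and a b c d :: 'a
  assumes "simple_graph V E"
    and "a \<in> V" "b \<in> V" "c \<in> V" "d \<in> V"
    and "distinct [a, b, c, d]"
    and "{a, b} \<in> E" "{c, d} \<in> E" "{a, c} \<notin> E" "{b, d} \<notin> E"
    and "E2 = (E - {{a, b}, {c, d}}) \<union> {{a, c}, {b, d}}"
  shows "\<bar>int (mu V E) - int (mu V E2)\<bar> \<le> 1"
proof -
  have "finite V" "V \<noteq> {}" using assms(1,2) by (auto simp: simple_graph_def)
  have "E \<subseteq> Pow V" using assms(1) by (auto simp: simple_graph_def)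
  then have "finite E" using \<open>finite V\<close> finite_subset by blast
  then have "finite E2" using assms(11) by simp
  have "E = (E2 - {{a, c}, {b, d}}) \<union> {{a, b}, {c, d}}"
    unfolding assms(11) using assms(6-10) by (auto simp: doubleton_eq_iff)
  moreover have "distinct [a, c, b, d]" using assms(6) by auto
  moreover have "{a, c} \<in> E2" "{b, d} \<in> E2" using assms(11) by auto
  ultimately have "mu V E \<le> mu V E2 + 1"
    using mu_swap_le[OF \<open>finite V\<close> \<open>V \<noteq> {}\<close> \<open>finite E2\<close>] by blast
  moreover have "mu V E2 \<le> mu V E + 1"
    using mu_swap_le[OF \<open>finite V\<close> \<open>V \<noteq> {}\<close> \<open>finite E\<close> assms(6-8,11)] .
  ultimately show ?thesis by linarith
qed

end
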